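(* Every admissible Kähler class $\Omega_{\mathbf r}$ on a KS orbifold $(S_{\mathbf n},\Delta_{\mathbf m})$ contains an admissible extremal Kähler metric whose scalar curvature is an affine-linear function of $\mathfrak z$. This metric has constant scalar curvature (which is then positive) if and only if $\alpha_0\beta_1-\alpha_1\beta_0=0$. Here, for $r=0,1$, - $\alpha_r=\int_{-1}^1t^rp_c(t)\,dt$; - $\beta_r=\int_{-1}^1\bigl(r_1s_1(1+r_2t)+r_2s_2(1+r_1t)\bigr)t^r\,dt+(-1)^r\frac{p_c(-1)}{m_\infty}+\frac{p_c(1)}{m_0}$; with $s_i=2/n_i$. Equivalently, the condition is $f(r_1,r_2)=0$, where $f(r_1,r_2)=9(m_0-m_\infty)n_1n_2-6(m_0+m_\infty)n_1n_2(r_1+r_2)+6(m_0-m_\infty)n_1n_2r_1r_2+3n_2(4m_0m_\infty-n_1(m_0-m_\infty))r_1^2+3n_1(4m_0m_\infty-n_2(m_0-m_\infty))r_2^2-(4m_0m_\infty(n_1+n_2)-3(m_0-m_\infty)n_1n_2)r_1^2r_2^2$.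
   Context: Setup. $S_{\mathbf n}=\mathbb P(\mathbb 1\oplus\mathcal O(n_1,n_2))\to\mathbb{CP}^1\times\mathbb{CP}^1$ with $n_1,n_2\in\mathbb Z\setminus\{0\}$. The KS orbifold $(S_{\mathbf n},\Delta_{\mathbf m})$, with $m_0,m_\infty\in\mathbb Z^+$, has cyclic isotropy $\mathbb Z_{m_0}$ along the zero section $e_0$ and $\mathbb Z_{m_\infty}$ along the infinity section $e_\infty$. Cohomology. Let $x_1,x_2$ be the pullbacks of the generators of $H^2$ of the two $\mathbb{CP}^1$ factors, and $x_3$ the Poincaré dual of $e_\infty$. Parameters. Fix reals $r_1,r_2$ with $0<|r_i|<1$ and $r_in_i>0$, put $p_c(t)=(1+r_1t)(1+r_2t)$, and define $\Omega_{\mathbf r}/2\pi=\frac{n_1(1+r_1)}{r_1}x_1+\frac{n_2(1+r_2)}{r_2}x_2+2x_3$. Admissible metric. An admissible metric in $\Omega_{\mathbf r}$ is $g=\sum_i\frac{1+r_i\mathfrak z}{r_i}g_i+\frac{d\mathfrak z^2}{\Theta}+\Theta\theta^2$, where: - $g_i$ is a metric on $\mathbb{CP}^1$ with $\pm g_i>0$ and scalar curvature $2s_i=4/n_i$; - $\mathfrak z$ is the fiberwise moment map with $e_0=\{\mathfrak z=1\}$ and $e_\infty=\{\mathfrak z=-1\}$; - $d\theta=\omega_1+\omega_2$; - $\Theta=F/p_c$, with $F>0$ on $(-1,1)$, $F(\pm1)=0$, $F'(-1)=2p_c(-1)/m_\infty$ and $F'(1)=-2p_c(1)/m_0$. Its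 scalar curvature is $\frac{2s_1r_1}{1+r_1\mathfrak z}+\frac{2s_2r_2}{1+r_2\mathfrak z}-\frac{F''(\mathfrak z)}{p_c(\mathfrak z)}$. *)

theory Defs
  imports "HOL-Analysis.Analysis"
begin

text \<open>Admissible data on the KS orbifold: parameters n1 n2 (nonzero integers),
  m0 minf (positive integers), r1 r2 real with 0 < abs ri < 1 and ri * ni > 0.
  An admissible metric in the class Omega_r is determined by the profile
  function F on [-1,1]; Theta = F / p_c.\<close>

definition pc :: "real \<Rightarrow> real \<Rightarrow> real \<Rightarrow> real" where
  "pc r1 r2 t = (1 + r1 * t) * (1 + r2 * t)"

definition sc :: "int \<Rightarrow> real" where
  "sc n = 2 / real_of_int n"

definition ks_params :: "int \<Rightarrow> int \<Rightarrow> int \<Rightarrow> int \<Rightarrow> real \<Rightarrow> real \<Rightarrow> bool" where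
  "ks_params n1 n2 m0 minf r1 r2 \<longleftrightarrow>
     n1 \<noteq> 0 \<and> n2 \<noteq> 0 \<and> m0 > 0 \<and> minf > 0 \<and>
     0 < \<bar>r1\<bar> \<and> \<bar>r1\<bar> < 1 \<and> 0 < \<bar>r2\<bar> \<and> \<bar>r2\<bar> < 1 \<and>
     r1 * real_of_int n1 > 0 \<and> r2 * real_of_int n2 > 0"

definition admissible_profile :: "int \<Rightarrow> int \<Rightarrow> real \<Rightarrow> real \<Rightarrow> (real \<Rightarrow> real) \<Rightarrow> bool" where
  "admissible_profile m0 minf r1 r2 F \<longleftrightarrow>
     (\<forall>k. \<forall>z\<in>{-1..1}. ((deriv ^^ k) F) differentiable (at z)) \<and>
     (\<forall>z\<in>{-1<..<1}. F z > 0) \<and> F (-1) = 0 \<and> F 1 = 0 \<and>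
     deriv F (-1) = 2 * pc r1 r2 (-1) / real_of_int minf \<and>
     deriv F 1 = - 2 * pc r1 r2 1 / real_of_int m0"

definition scal :: "int \<Rightarrow> int \<Rightarrow> real \<Rightarrow> real \<Rightarrow> (real \<Rightarrow> real) \<Rightarrow> real \<Rightarrow> real" where
  "scal n1 n2 r1 r2 F z =
     2 * sc n1 * r1 / (1 + r1 * z) + 2 * sc n2 * r2 / (1 + r2 * z)
     - (deriv ^^ 2) F z / pc r1 r2 z"

definition extremal_profile :: "int \<Rightarrow> int \<Rightarrow> real \<Rightarrow> real \<Rightarrow> (real \<Rightarrow> real) \<Rightarrow> bool" where
  "extremal_profile n1 n2 r1 r2 F \<longleftrightarrow>
     (\<exists>A B. \<forall>z\<in>{-1..1}. scal n1 n2 r1 r2 F z = A * z + B)"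

definition alpha :: "real \<Rightarrow> real \<Rightarrow> nat \<Rightarrow> real" where
  "alpha r1 r2 r = integral {-1..1} (\<lambda>t. t ^ r * pc r1 r2 t)"

definition beta :: "int \<Rightarrow> int \<Rightarrow> int \<Rightarrow> int \<Rightarrow> real \<Rightarrow> real \<Rightarrow> nat \<Rightarrow> real" where
  "beta n1 n2 m0 minf r1 r2 r =
     integral {-1..1} (\<lambda>t. (r1 * sc n1 * (1 + r2 * t) + r2 * sc n2 * (1 + r1 * t)) * t ^ r)
     + (-1) ^ r * pc r1 r2 (-1) / real_of_int minf + pc r1 r2 1 / real_of_int m0"

definition fpoly :: "int \<Rightarrow> int \<Rightarrow> int \<Rightarrow> int \<Rightarrow> real \<Rightarrow> real \<Rightarrow> real" where
  "fpoly n1 n2 m0 minf r1 r2 =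
    (let N1 = real_of_int n1; N2 = real_of_int n2; M0 = real_of_int m0; Mi = real_of_int minf in
     9 * (M0 - Mi) * N1 * N2 - 6 * (M0 + Mi) * N1 * N2 * (r1 + r2)
     + 6 * (M0 - Mi) * N1 * N2 * r1 * r2
     + 3 * N2 * (4 * M0 * Mi - N1 * (M0 - Mi)) * r1 ^ 2
     + 3 * N1 * (4 * M0 * Mi - N2 * (M0 - Mi)) * r2 ^ 2
     - (4 * M0 * Mi * (N1 + N2) - 3 * (M0 - Mi) * N1 * N2) * r1 ^ 2 * r2 ^ 2)"

end

theory Submission
  imports Defs
begin

text \<open>If the scalar curvature of an admissible metric equals \<open>A z + B\<close>, the profile satisfies
  \<open>F'' = p\<^sub>c (s - (A z + B))\<close>, where \<open>s(z) = 2 s\<^sub>1 r\<^sub>1 / (1 + r\<^sub>1 z) + 2 s\<^sub>2 r\<^sub>2 / (1 + r\<^sub>2 z)\<close>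
  is the part of the scalar curvature not involving \<open>F\<close>. Integrating \<open>F''\<close> and \<open>z F''\<close> over
  \<open>[-1, 1]\<close> and inserting the boundary conditions yields exactly the linear system
  \<open>A \<alpha>\<^sub>1 + B \<alpha>\<^sub>0 = 2 \<beta>\<^sub>0\<close>, \<open>A \<alpha>\<^sub>2 + B \<alpha>\<^sub>1 = 2 \<beta>\<^sub>1\<close>, whose determinant \<open>\<alpha>\<^sub>0 \<alpha>\<^sub>2 - \<alpha>\<^sub>1\<^sup>2\<close> is
  positive. So \<open>A = 0\<close> iff \<open>\<alpha>\<^sub>0 \<beta>\<^sub>1 - \<alpha>\<^sub>1 \<beta>\<^sub>0 = 0\<close>, and a constant value \<open>B\<close> satisfies
  \<open>B \<alpha>\<^sub>0 = 2 \<beta>\<^sub>0 > 0\<close>. Conversely, for the solution \<open>(A, B)\<close> of the system, integrating the cubic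
  \<open>p\<^sub>c (s - (A z + B))\<close> twice from \<open>z = -1\<close> gives a polynomial profile meeting all boundary
  conditions, and it is positive inside because \<open>F'' / p\<^sub>c\<close> is convex. Finally
  \<open>\<alpha>\<^sub>0 \<beta>\<^sub>1 - \<alpha>\<^sub>1 \<beta>\<^sub>0\<close> equals \<open>-2 f(r\<^sub>1, r\<^sub>2) / (9 n\<^sub>1 n\<^sub>2 m\<^sub>0 m\<^sub>\<infinity>)\<close>.\<close>

lemma has_integral_real_deriv:
  fixes f f' :: "real \<Rightarrow> real"
  assumes "a \<le> b" and "\<And>x. x \<in> {a..b} \<Longrightarrow> (f has_real_derivative f' x) (at x)"
  shows "(f' has_integral (f b - f a)) {a..b}"
  using assms by (intro fundamental_theorem_of_calculus)
    (auto simp: has_real_derivative_iff_has_vector_derivative intro: has_vector_derivative_at_within)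

lemma quartic_integral:
  fixes f :: "real \<Rightarrow> real"
  assumes "\<And>t. f t = c0 + c1 * t + c2 * t^2 + c3 * t^3 + c4 * t^4"
  shows "integral {-1..1} f = 2 * c0 + 2 * c2 / 3 + 2 * c4 / 5"
proof -
  let ?G = "\<lambda>t. c0 * t + c1 * t^2 / 2 + c2 * t^3 / 3 + c3 * t^4 / 4 + c4 * t^5 / 5"
  have "(f has_integral ?G 1 - ?G (-1)) {-1..1}"
    by (rule has_integral_real_deriv)
      (auto intro!: derivative_eq_intros simp: assms eval_nat_numeral field_simps)
  then show ?thesis
    by (simp add: integral_unique)
qed

lemma second_deriv_moments:
  fixes F F' F'' :: "real \<Rightarrow> real"
  assumes "a \<le> b"
    and F': "\<And>z. z \<in> {a..b} \<Longrightarrow> (F has_real_derivative F' z) (at z)"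
    and F'': "\<And>z. z \<in> {a..b} \<Longrightarrow> (F' has_real_derivative F'' z) (at z)"
  shows "(F'' has_integral F' b - F' a) {a..b}"
    and "((\<lambda>t. t * F'' t) has_integral (b * F' b - F b) - (a * F' a - F a)) {a..b}"
proof -
  show "(F'' has_integral F' b - F' a) {a..b}"
    using assms(1) F'' by (rule has_integral_real_deriv)
  show "((\<lambda>t. t * F'' t) has_integral (b * F' b - F b) - (a * F' a - F a)) {a..b}"
    using assms(1) by (rule has_integral_real_deriv[where f = "\<lambda>t. t * F' t - F t"])
      (use F' F'' in \<open>auto intro!: derivative_eq_intros\<close>)
qed

text \<open>A nonpositive interior value would give, by the mean value theorem, points
  \<open>y1 < y2 < y3\<close> with \<open>F''\<close> negative, nonnegative and negative; the chord of the
  convex function \<open>g\<close> over \<open>[y1, y3]\<close> rules this out.\<close>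
lemma pos_if_second_deriv_convex_sign:
  fixes F F' F'' q g :: "real \<Rightarrow> real"
  assumes F': "\<And>z. z \<in> {a..b} \<Longrightarrow> (F has_real_derivative F' z) (at z)"
    and F'': "\<And>z. z \<in> {a..b} \<Longrightarrow> (F' has_real_derivative F'' z) (at z)"
    and "F a = 0" "F b = 0" "F' a > 0" "F' b < 0"
    and F''_eq: "\<And>z. z \<in> {a..b} \<Longrightarrow> F'' z = q z * g z"
    and q_pos: "\<And>z. z \<in> {a..b} \<Longrightarrow> q z > 0"
    and g_convex: "convex_on {a..b} g"
    and z: "a < z" "z < b"
  shows "F z > 0"
proof (rule ccontr)
  assume "\<not> F z > 0"
  then have Fz: "F z \<le> 0" by simp
  have sign_g: "g y < 0 \<longleftrightarrow> F'' y < 0" if "y \<in> {a..b}" for y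
    using F''_eq[OF that] q_pos[OF that] by (auto simp: mult_less_0_iff)
  obtain x1 where x1: "a < x1" "x1 < z" "F z - F a = (z - a) * F' x1"
    using MVT2[of a z F F'] F' z by auto
  obtain x2 where x2: "z < x2" "x2 < b" "F b - F z = (b - z) * F' x2"
    using MVT2[of z b F F'] F' z by auto
  have "(z - a) * F' x1 \<le> 0" "(b - z) * F' x2 \<ge> 0"
    using x1 x2 Fz \<open>F a = 0\<close> \<open>F b = 0\<close> by simp_all
  then have "F' x1 \<le> 0" "F' x2 \<ge> 0"
    using x1 x2 by (simp_all add: mult_le_0_iff zero_le_mult_iff)
  obtain y1 where y1: "a < y1" "y1 < x1" "F' x1 - F' a = (x1 - a) * F'' y1"
    using MVT2[of a x1 F' F''] F'' x1 z by auto
  obtain y2 where y2: "x1 < y2" "y2 < x2" "F' x2 - F' x1 = (x2 - x1) * F'' y2"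
    using MVT2[of x1 x2 F' F''] F'' x1 x2 by auto
  obtain y3 where y3: "x2 < y3" "y3 < b" "F' b - F' x2 = (b - x2) * F'' y3"
    using MVT2[of x2 b F' F''] F'' x2 z by auto
  have "(x1 - a) * F'' y1 < 0" "(x2 - x1) * F'' y2 \<ge> 0" "(b - x2) * F'' y3 < 0"
    using y1 y2 y3 \<open>F' x1 \<le> 0\<close> \<open>F' x2 \<ge> 0\<close> \<open>F' a > 0\<close> \<open>F' b < 0\<close> by linarith+
  then have "F'' y1 < 0" "F'' y2 \<ge> 0" "F'' y3 < 0"
    using y1 y2 y3 by (simp_all add: mult_less_0_iff zero_le_mult_iff)
  then have g: "g y1 < 0" "g y2 \<ge> 0" "g y3 < 0"
    using sign_g y1 y2 y3 x1 x2 z by (auto simp flip: not_less)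
  have "convex_on {y1..y3} g"
    using y1 y3 by (intro convex_on_subset[OF g_convex]) auto
  then have "g y2 \<le> (g y3 - g y1) / (y3 - y1) * (y2 - y1) + g y1"
    using y1 y2 y3 x1 x2 by (intro convex_onD_Icc') auto
  also have "\<dots> = ((y3 - y2) * g y1 + (y2 - y1) * g y3) / (y3 - y1)"
    using y1 y2 y3 x1 x2 by (simp add: field_simps)
  also have "\<dots> < 0"
    using g y1 y2 y3 x1 x2 by (intro divide_neg_pos add_neg_neg mult_pos_neg) auto
  finally show False using g by simp
qed

lemma convex_on_inverse_affine:
  fixes S :: "real set"
  assumes "convex S" and pos: "\<And>z. z \<in> S \<Longrightarrow> 1 + r * z > 0"
  shows "convex_on S (\<lambda>z. inverse (1 + r * z))"
proof (rule convex_onI[OF _ \<open>convex S\<close>])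
  fix t x y :: real assume t: "0 < t" "t < 1" and xy: "x \<in> S" "y \<in> S"
  have "1 + r * ((1 - t) *\<^sub>R x + t *\<^sub>R y) = (1 - t) *\<^sub>R (1 + r * x) + t *\<^sub>R (1 + r * y)"
    by (simp add: algebra_simps)
  moreover have "convex_on {0<..} (inverse :: real \<Rightarrow> real)"
    by (rule convex_on_inverse) auto
  then have "inverse ((1 - t) *\<^sub>R (1 + r * x) + t *\<^sub>R (1 + r * y))
      \<le> (1 - t) * inverse (1 + r * x) + t * inverse (1 + r * y)"
    by (rule convex_onD) (use t pos[OF xy(1)] pos[OF xy(2)] in auto)
  ultimately show "inverse (1 + r * ((1 - t) *\<^sub>R x + t *\<^sub>R y))
      \<le> (1 - t) * inverse (1 + r * x) + t * inverse (1 + r * y)"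
    by simp
qed

lemma concave_on_affine:
  fixes S :: "real set"
  assumes "convex S"
  shows "concave_on S (\<lambda>z. A * z + B)"
  unfolding concave_on_iff
proof (intro conjI assms ballI allI impI)
  fix x y u v :: real assume "u + v = 1"
  have "u * (A * x + B) + v * (A * y + B) = A * (u * x + v * y) + (u + v) * B"
    by (simp add: algebra_simps)
  also have "\<dots> = A * (u *\<^sub>R x + v *\<^sub>R y) + B"
    using \<open>u + v = 1\<close> by simp
  finally show "u * (A * x + B) + v * (A * y + B) \<le> A * (u *\<^sub>R x + v *\<^sub>R y) + B"
    by simp
qed

lemma real_polynomial_function_higher_deriv:
  fixes f :: "real \<Rightarrow> real"
  assumes "real_polynomial_function f"
  shows "real_polynomial_function ((deriv ^^ k) f)"
proof (induction k)
  case (Suc k)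
  obtain p where "real_polynomial_function p" "\<And>x. ((deriv ^^ k) f has_real_derivative p x) (at x)"
    using has_real_derivative_polynomial_function[OF Suc.IH] by blast
  then have "deriv ((deriv ^^ k) f) = p"
    by (intro ext DERIV_imp_deriv)
  with \<open>real_polynomial_function p\<close> show ?case by simp
qed (simp add: assms)

lemma cubic_initial_value_problem:
  fixes c0 c1 c2 c3 x0 s :: real
  assumes P: "\<And>z. P z = c0 + c1 * z + c2 * z^2 + c3 * z^3"
  obtains F F' where "real_polynomial_function F" "F x0 = 0" "F' x0 = s"
    "\<And>z. (F has_real_derivative F' z) (at z)"
    "\<And>z. (F' has_real_derivative P z) (at z)"
proof
  define Q where "Q z = c0 * z^2 / 2 + c1 * z^3 / 6 + c2 * z^4 / 12 + c3 * z^5 / 20" for z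
  define Q' where "Q' z = c0 * z + c1 * z^2 / 2 + c2 * z^3 / 3 + c3 * z^4 / 4" for z
  have id: "real_polynomial_function (\<lambda>z::real. z)"
    by (rule real_polynomial_function.intros(1)) (rule bounded_linear_ident)
  show "real_polynomial_function (\<lambda>z. Q z - Q x0 + (s - Q' x0) * (z - x0))"
    unfolding Q_def by (intro real_polynomial_function.intros(2-4) real_polynomial_function_diff
        real_polynomial_function_divide real_polynomial_function_power id)
  show "((\<lambda>z. Q z - Q x0 + (s - Q' x0) * (z - x0)) has_real_derivative Q' z - Q' x0 + s) (at z)" for z
    unfolding Q_def Q'_def by (auto intro!: derivative_eq_intros simp: eval_nat_numeral field_simps)
  show "((\<lambda>z. Q' z - Q' x0 + s) has_real_derivative P z) (at z)" for z
    unfolding Q'_def P by (auto intro!: derivative_eq_intros simp: eval_nat_numeral field_simps)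
qed simp_all

lemma linear_system_2x2_slope:
  fixes x0 x1 x2 y0 y1 A B :: real
  assumes "A * x1 + B * x0 = y0" "A * x2 + B * x1 = y1"
  shows "A * (x0 * x2 - x1^2) = x0 * y1 - x1 * y0"
  using assms by (auto simp: algebra_simps power2_eq_square)

lemma linear_system_2x2_solvable:
  fixes x0 x1 x2 y0 y1 :: real
  assumes "x0 * x2 - x1^2 \<noteq> 0"
  shows "\<exists>A B. A * x1 + B * x0 = y0 \<and> A * x2 + B * x1 = y1"
proof -
  define d where "d = x0 * x2 - x1^2"
  have "(x0 * y1 - x1 * y0) * x1 + (x2 * y0 - x1 * y1) * x0 = y0 * d"
    and "(x0 * y1 - x1 * y0) * x2 + (x2 * y0 - x1 * y1) * x1 = y1 * d"
    unfolding d_def by (simp_all add: algebra_simps power2_eq_square)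
  then have "(x0 * y1 - x1 * y0) / d * x1 + (x2 * y0 - x1 * y1) / d * x0 = y0"
    and "(x0 * y1 - x1 * y0) / d * x2 + (x2 * y0 - x1 * y1) / d * x1 = y1"
    using assms unfolding d_def by (simp_all add: divide_simps)
  then show ?thesis by blast
qed

lemma affine_constant_on_interval_iff:
  fixes a b A B c :: real
  assumes "a < b"
  shows "(\<forall>z\<in>{a..b}. A * z + B = c) \<longleftrightarrow> A = 0 \<and> B = c"
proof
  assume "\<forall>z\<in>{a..b}. A * z + B = c"
  then have "A * a + B = c" "A * b + B = c" using assms by auto
  then have "A * b = A * a" by linarith
  then have "A = 0 \<or> b = a" by simp
  with assms \<open>A * a + B = c\<close> show "A = 0 \<and> B = c" by auto
qed simp

lemma one_plus_mult_pos:
  fixes r z :: real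
  assumes "\<bar>r\<bar> < 1" "z \<in> {-1..1}"
  shows "1 + r * z > 0"
proof -
  have "\<bar>z\<bar> \<le> 1"
    using assms(2) by auto
  then have "\<bar>r * z\<bar> \<le> \<bar>r\<bar>"
    by (simp add: abs_mult mult_left_le)
  with assms(1) show ?thesis by linarith
qed

lemma pc_pos: "\<bar>r1\<bar> < 1 \<Longrightarrow> \<bar>r2\<bar> < 1 \<Longrightarrow> z \<in> {-1..1} \<Longrightarrow> pc r1 r2 z > 0"
  unfolding pc_def by (simp add: one_plus_mult_pos)

lemma mult_sc_pos: "r * real_of_int n > 0 \<Longrightarrow> r * sc n > 0"
  unfolding sc_def by (auto simp: zero_less_mult_iff zero_less_divide_iff divide_less_0_iff)

lemma alpha_has_integral: "((\<lambda>t. t ^ k * pc r1 r2 t) has_integral alpha r1 r2 k) {-1..1}"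
  unfolding alpha_def pc_def
  by (intro integrable_integral integrable_continuous_interval continuous_intros)

lemma alpha_0: "alpha r1 r2 0 = 2 + 2 * r1 * r2 / 3"
  using quartic_integral[of "\<lambda>t. t ^ 0 * pc r1 r2 t" 1 "r1 + r2" "r1 * r2" 0 0]
  by (simp add: alpha_def pc_def algebra_simps power2_eq_square)

lemma alpha_1: "alpha r1 r2 1 = 2 * (r1 + r2) / 3"
  using quartic_integral[of "\<lambda>t. t ^ 1 * pc r1 r2 t" 0 1 "r1 + r2" "r1 * r2" 0]
  by (simp add: alpha_def pc_def algebra_simps power2_eq_square power3_eq_cube)

lemma alpha_2: "alpha r1 r2 2 = 2 / 3 + 2 * r1 * r2 / 5"
  using quartic_integral[of "\<lambda>t. t ^ 2 * pc r1 r2 t" 0 0 1 "r1 + r2" "r1 * r2"]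
  by (simp add: alpha_def pc_def algebra_simps eval_nat_numeral)

lemma beta_0:
  "beta n1 n2 m0 minf r1 r2 0 = 2 * (r1 * sc n1 + r2 * sc n2)
     + pc r1 r2 (-1) / real_of_int minf + pc r1 r2 1 / real_of_int m0"
  using quartic_integral[of "\<lambda>t. (r1 * sc n1 * (1 + r2 * t) + r2 * sc n2 * (1 + r1 * t)) * t ^ 0"
      "r1 * sc n1 + r2 * sc n2" "r1 * r2 * (sc n1 + sc n2)" 0 0 0]
  by (simp add: beta_def algebra_simps)

lemma beta_1:
  "beta n1 n2 m0 minf r1 r2 1 = 2 * r1 * r2 * (sc n1 + sc n2) / 3
     - pc r1 r2 (-1) / real_of_int minf + pc r1 r2 1 / real_of_int m0"
  using quartic_integral[of "\<lambda>t. (r1 * sc n1 * (1 + r2 * t) + r2 * sc n2 * (1 + r1 * t)) * t ^ 1"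
      0 "r1 * sc n1 + r2 * sc n2" "r1 * r2 * (sc n1 + sc n2)" 0 0]
  by (simp add: beta_def algebra_simps power2_eq_square)

lemma alpha_gram_det_pos:
  assumes "\<bar>r1\<bar> < 1" "\<bar>r2\<bar> < 1"
  shows "alpha r1 r2 0 * alpha r1 r2 2 - (alpha r1 r2 1)^2 > 0"
proof -
  have "r1^2 < 1" "r2^2 < 1"
    using assms by (simp_all add: abs_square_less_1)
  moreover have "16 * (r1 * r2) \<ge> -8 * r1^2 - 8 * r2^2"
    using sum_squares_ge_zero[of "r1 + r2" 0] by (simp add: power2_eq_square algebra_simps)
  moreover have "alpha r1 r2 0 * alpha r1 r2 2 - (alpha r1 r2 1)^2
      = 4/3 - 4 * r1^2 / 9 - 4 * r2^2 / 9 + 16 * (r1 * r2) / 45 + 4 * (r1 * r2)^2 / 15"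
    unfolding alpha_0 alpha_1 alpha_2 by (simp add: field_simps power2_eq_square)
  ultimately show ?thesis
    using zero_le_power2[of "r1 * r2"] by linarith
qed

lemma alpha_beta_det_eq_0_iff_fpoly:
  assumes "ks_params n1 n2 m0 minf r1 r2"
  shows "alpha r1 r2 0 * beta n1 n2 m0 minf r1 r2 1 - alpha r1 r2 1 * beta n1 n2 m0 minf r1 r2 0 = 0
    \<longleftrightarrow> fpoly n1 n2 m0 minf r1 r2 = 0"
proof -
  have nonzero: "real_of_int n1 \<noteq> 0" "real_of_int n2 \<noteq> 0" "real_of_int m0 \<noteq> 0" "real_of_int minf \<noteq> 0"
    using assms by (auto simp: ks_params_def)
  then have "(alpha r1 r2 0 * beta n1 n2 m0 minf r1 r2 1 - alpha r1 r2 1 * beta n1 n2 m0 minf r1 r2 0)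
      * (real_of_int n1 * real_of_int n2 * real_of_int m0 * real_of_int minf)
      = -2/9 * fpoly n1 n2 m0 minf r1 r2"
    unfolding alpha_0 alpha_1 beta_0 beta_1 fpoly_def Let_def sc_def pc_def
    by (simp add: field_simps power2_eq_square)
  with nonzero show ?thesis by auto
qed

locale ks_orbifold =
  fixes n1 n2 m0 minf :: int and r1 r2 :: real
  assumes params: "ks_params n1 n2 m0 minf r1 r2"
begin

abbreviation "\<alpha> \<equiv> alpha r1 r2"
abbreviation "\<beta> \<equiv> beta n1 n2 m0 minf r1 r2"

lemma abs_r1: "\<bar>r1\<bar> < 1" and abs_r2: "\<bar>r2\<bar> < 1"
  using params by (simp_all add: ks_params_def)

lemma pc_positive: "z \<in> {-1..1} \<Longrightarrow> pc r1 r2 z > 0"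
  using abs_r1 abs_r2 by (rule pc_pos)

definition base_scal :: "real \<Rightarrow> real" where
  "base_scal z = 2 * sc n1 * r1 / (1 + r1 * z) + 2 * sc n2 * r2 / (1 + r2 * z)"

definition extremal_F2 :: "real \<Rightarrow> real \<Rightarrow> real \<Rightarrow> real" where
  "extremal_F2 A B z =
     2 * (r1 * sc n1 * (1 + r2 * z) + r2 * sc n2 * (1 + r1 * z)) - (A * z + B) * pc r1 r2 z"

lemma extremal_F2_eq:
  assumes "z \<in> {-1..1}"
  shows "extremal_F2 A B z = pc r1 r2 z * (base_scal z - (A * z + B))"
proof -
  have cancel: "(u * v) * (c / u + d / v) = c * v + d * u" if "u \<noteq> 0" "v \<noteq> 0" for u v c d :: real
    using that by (simp add: field_simps)
  have "1 + r1 * z \<noteq> 0" "1 + r2 * z \<noteq> 0"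
    using assms abs_r1 abs_r2 one_plus_mult_pos by (metis less_irrefl)+
  then have "pc r1 r2 z * base_scal z = 2 * sc n1 * r1 * (1 + r2 * z) + 2 * sc n2 * r2 * (1 + r1 * z)"
    unfolding pc_def base_scal_def by (rule cancel)
  then show ?thesis
    unfolding extremal_F2_def by (simp add: algebra_simps)
qed

lemma extremal_F2_cubic:
  "extremal_F2 A B z = (2 * r1 * sc n1 + 2 * r2 * sc n2 - B)
     + (2 * r1 * sc n1 * r2 + 2 * r2 * sc n2 * r1 - A - B * (r1 + r2)) * z
     + (- A * (r1 + r2) - B * r1 * r2) * z^2 + (- A * r1 * r2) * z^3"
  unfolding extremal_F2_def pc_def by (simp add: algebra_simps power2_eq_square power3_eq_cube)

lemma scal_eq_affine_iff:
  assumes "z \<in> {-1..1}"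
  shows "scal n1 n2 r1 r2 F z = A * z + B \<longleftrightarrow> (deriv ^^ 2) F z = extremal_F2 A B z"
proof -
  have "scal n1 n2 r1 r2 F z = base_scal z - (deriv ^^ 2) F z / pc r1 r2 z"
    unfolding scal_def base_scal_def by simp
  then have "scal n1 n2 r1 r2 F z = A * z + B
      \<longleftrightarrow> (deriv ^^ 2) F z / pc r1 r2 z = base_scal z - (A * z + B)"
    by auto
  also have "\<dots> \<longleftrightarrow> (deriv ^^ 2) F z = pc r1 r2 z * (base_scal z - (A * z + B))"
    using pc_positive[OF assms] by (auto simp: divide_eq_eq mult.commute)
  finally show ?thesis
    unfolding extremal_F2_eq[OF assms] .
qed

lemma convex_on_base_scal_minus_affine: "convex_on {-1..1} (\<lambda>z. base_scal z - (A * z + B))"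
proof -
  have "0 \<le> 2 * sc n1 * r1" "0 \<le> 2 * sc n2 * r2"
    using mult_sc_pos[of r1 n1] mult_sc_pos[of r2 n2] params
    by (simp_all add: ks_params_def mult.commute)
  then have "convex_on {-1..1}
      (\<lambda>z. 2 * sc n1 * r1 * inverse (1 + r1 * z) + 2 * sc n2 * r2 * inverse (1 + r2 * z))"
    using abs_r1 abs_r2
    by (intro convex_on_add convex_on_cmul convex_on_inverse_affine) (auto simp: one_plus_mult_pos)
  then show ?thesis
    unfolding base_scal_def divide_inverse by (intro convex_on_diff concave_on_affine) auto
qed

lemma extremal_F2_moment:
  "((\<lambda>t. t ^ k * extremal_F2 A B t) has_integral
     2 * \<beta> k - A * \<alpha> (Suc k) - B * \<alpha> k
     - 2 * ((-1) ^ k * pc r1 r2 (-1) / real_of_int minf + pc r1 r2 1 / real_of_int m0)) {-1..1}"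
proof -
  define S where "S t = (r1 * sc n1 * (1 + r2 * t) + r2 * sc n2 * (1 + r1 * t)) * t ^ k" for t
  define bd where "bd = (-1) ^ k * pc r1 r2 (-1) / real_of_int minf + pc r1 r2 1 / real_of_int m0"
  have "(S has_integral \<beta> k - bd) {-1..1}"
  proof -
    have "(S has_integral integral {-1..1} S) {-1..1}"
      unfolding S_def by (intro integrable_integral integrable_continuous_interval continuous_intros)
    then show ?thesis
      unfolding beta_def S_def bd_def by simp
  qed
  then have "((\<lambda>t. 2 * S t - A * (t ^ Suc k * pc r1 r2 t) - B * (t ^ k * pc r1 r2 t)) has_integral
      2 * (\<beta> k - bd) - A * \<alpha> (Suc k) - B * \<alpha> k) {-1..1}"
    by (intro has_integral_diff has_integral_mult_right alpha_has_integral)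
  moreover have "(\<lambda>t. 2 * S t - A * (t ^ Suc k * pc r1 r2 t) - B * (t ^ k * pc r1 r2 t))
      = (\<lambda>t. t ^ k * extremal_F2 A B t)"
    unfolding S_def extremal_F2_def by (simp add: fun_eq_iff algebra_simps)
  ultimately show ?thesis
    unfolding bd_def by (simp add: algebra_simps)
qed

lemma extremal_moment_identities:
  fixes F F' :: "real \<Rightarrow> real"
  assumes F': "\<And>z. z \<in> {-1..1} \<Longrightarrow> (F has_real_derivative F' z) (at z)"
    and F'': "\<And>z. z \<in> {-1..1} \<Longrightarrow> (F' has_real_derivative extremal_F2 A B z) (at z)"
  shows "F' 1 - F' (-1) = 2 * \<beta> 0 - A * \<alpha> 1 - B * \<alpha> 0
           - 2 * (pc r1 r2 (-1) / real_of_int minf + pc r1 r2 1 / real_of_int m0)"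
    and "F' 1 + F' (-1) - F 1 + F (-1) = 2 * \<beta> 1 - A * \<alpha> 2 - B * \<alpha> 1
           + 2 * (pc r1 r2 (-1) / real_of_int minf - pc r1 r2 1 / real_of_int m0)"
proof -
  have "(extremal_F2 A B has_integral F' 1 - F' (-1)) {-1..1}"
    and "((\<lambda>t. t * extremal_F2 A B t) has_integral (1 * F' 1 - F 1) - (-1 * F' (-1) - F (-1))) {-1..1}"
    using second_deriv_moments[of "-1" 1 F F' "extremal_F2 A B"] F' F'' by auto
  moreover have "(extremal_F2 A B has_integral 2 * \<beta> 0 - A * \<alpha> 1 - B * \<alpha> 0
           - 2 * (pc r1 r2 (-1) / real_of_int minf + pc r1 r2 1 / real_of_int m0)) {-1..1}"
    and "((\<lambda>t. t * extremal_F2 A B t) has_integral 2 * \<beta> 1 - A * \<alpha> 2 - B * \<alpha> 1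
           + 2 * (pc r1 r2 (-1) / real_of_int minf - pc r1 r2 1 / real_of_int m0)) {-1..1}"
    using extremal_F2_moment[of 0 A B] extremal_F2_moment[of 1 A B]
    by (simp_all add: numeral_2_eq_2 algebra_simps)
  ultimately show "F' 1 - F' (-1) = 2 * \<beta> 0 - A * \<alpha> 1 - B * \<alpha> 0
           - 2 * (pc r1 r2 (-1) / real_of_int minf + pc r1 r2 1 / real_of_int m0)"
    and "F' 1 + F' (-1) - F 1 + F (-1) = 2 * \<beta> 1 - A * \<alpha> 2 - B * \<alpha> 1
           + 2 * (pc r1 r2 (-1) / real_of_int minf - pc r1 r2 1 / real_of_int m0)"
    by (auto dest: has_integral_unique)
qed

lemma admissible_profile_derivatives:
  assumes "admissible_profile m0 minf r1 r2 F" "z \<in> {-1..1}"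
  shows "(F has_real_derivative deriv F z) (at z)"
    and "(deriv F has_real_derivative (deriv ^^ 2) F z) (at z)"
proof -
  have "\<forall>k. (deriv ^^ k) F differentiable (at z)"
    using assms by (simp add: admissible_profile_def)
  from this[rule_format, of 0] this[rule_format, of 1]
  show "(F has_real_derivative deriv F z) (at z)"
    and "(deriv F has_real_derivative (deriv ^^ 2) F z) (at z)"
    by (simp_all add: numeral_2_eq_2 DERIV_deriv_iff_real_differentiable)
qed

lemma extremal_linear_system:
  assumes adm: "admissible_profile m0 minf r1 r2 F"
    and affine: "\<forall>z\<in>{-1..1}. scal n1 n2 r1 r2 F z = A * z + B"
  shows "A * \<alpha> 1 + B * \<alpha> 0 = 2 * \<beta> 0" and "A * \<alpha> 2 + B * \<alpha> 1 = 2 * \<beta> 1"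
proof -
  have "(deriv F has_real_derivative extremal_F2 A B z) (at z)" if "z \<in> {-1..1}" for z
    using admissible_profile_derivatives(2)[OF adm that] scal_eq_affine_iff[OF that, of F A B] affine that
    by simp
  note moments = extremal_moment_identities[OF admissible_profile_derivatives(1)[OF adm] this]
  from adm have "F (-1) = 0" "F 1 = 0"
    "deriv F (-1) = 2 * pc r1 r2 (-1) / real_of_int minf" "deriv F 1 = - 2 * pc r1 r2 1 / real_of_int m0"
    by (simp_all add: admissible_profile_def)
  with moments show "A * \<alpha> 1 + B * \<alpha> 0 = 2 * \<beta> 0" and "A * \<alpha> 2 + B * \<alpha> 1 = 2 * \<beta> 1"
    by (simp_all add: field_simps)
qed

lemma extremal_profile_positive:
  fixes F F' :: "real \<Rightarrow> real"
  assumes F': "\<And>z. z \<in> {-1..1} \<Longrightarrow> (F has_real_derivative F' z) (at z)"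
    and F'': "\<And>z. z \<in> {-1..1} \<Longrightarrow> (F' has_real_derivative extremal_F2 A B z) (at z)"
    and "F (-1) = 0" "F 1 = 0" "F' (-1) > 0" "F' 1 < 0" "z \<in> {-1<..<1}"
  shows "F z > 0"
proof (rule pos_if_second_deriv_convex_sign[OF F' F'' assms(3-6)])
  show "extremal_F2 A B x = pc r1 r2 x * (base_scal x - (A * x + B))" if "x \<in> {-1..1}" for x
    using that by (rule extremal_F2_eq)
qed (use assms(7) pc_positive convex_on_base_scal_minus_affine in auto)

lemma admissible_profile_of_linear_system:
  assumes system: "A * \<alpha> 1 + B * \<alpha> 0 = 2 * \<beta> 0" "A * \<alpha> 2 + B * \<alpha> 1 = 2 * \<beta> 1"
  shows "\<exists>F. admissible_profile m0 minf r1 r2 F \<and> (\<forall>z\<in>{-1..1}. scal n1 n2 r1 r2 F z = A * z + B)"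
proof -
  obtain F F' where poly: "real_polynomial_function F"
    and init: "F (-1) = 0" "F' (-1) = 2 * pc r1 r2 (-1) / real_of_int minf"
    and F': "\<And>z. (F has_real_derivative F' z) (at z)"
    and F'': "\<And>z. (F' has_real_derivative extremal_F2 A B z) (at z)"
    using cubic_initial_value_problem[OF extremal_F2_cubic[of A B]] by blast
  have deriv_F: "deriv F = F'" and deriv_F': "deriv F' = extremal_F2 A B"
    using F' F'' by (auto intro!: ext DERIV_imp_deriv)
  note moments = extremal_moment_identities[OF F' F'']
  have end_values: "F 1 = 0" "F' 1 = - 2 * pc r1 r2 1 / real_of_int m0"
    using moments system init by (simp_all add: algebra_simps)
  have "pc r1 r2 (-1) > 0" "pc r1 r2 1 > 0" "real_of_int m0 > 0" "real_of_int minf > 0"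
    using pc_positive params by (auto simp: ks_params_def)
  then have "F' (-1) > 0" "F' 1 < 0"
    using init end_values by simp_all
  then have positive: "F z > 0" if "z \<in> {-1<..<1}" for z
    using extremal_profile_positive[OF F' F''] init end_values that by blast
  have smooth: "(deriv ^^ k) F differentiable (at z)" for k z
    using differentiable_at_real_polynomial_function real_polynomial_function_higher_deriv[OF poly]
    by blast
  have "admissible_profile m0 minf r1 r2 F"
    unfolding admissible_profile_def using smooth positive init end_values deriv_F by auto
  moreover have "\<forall>z\<in>{-1..1}. scal n1 n2 r1 r2 F z = A * z + B"
    using scal_eq_affine_iff deriv_F deriv_F' by (simp add: numeral_2_eq_2)
  ultimately show ?thesis by blast
qed

lemma extremal_admissible_profile_exists:
  "\<exists>F. admissible_profile m0 minf r1 r2 F \<and> extremal_profile n1 n2 r1 r2 F"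
proof -
  have "\<alpha> 0 * \<alpha> 2 - (\<alpha> 1)^2 \<noteq> 0"
    using alpha_gram_det_pos[OF abs_r1 abs_r2] by simp
  then obtain A B where "A * \<alpha> 1 + B * \<alpha> 0 = 2 * \<beta> 0" "A * \<alpha> 2 + B * \<alpha> 1 = 2 * \<beta> 1"
    using linear_system_2x2_solvable by blast
  then show ?thesis
    unfolding extremal_profile_def using admissible_profile_of_linear_system by blast
qed

lemma alpha_0_pos: "\<alpha> 0 > 0"
proof -
  have "\<bar>r1\<bar> * \<bar>r2\<bar> \<le> \<bar>r1\<bar>"
    using abs_r2 by (simp add: mult_left_le)
  then have "\<bar>r1 * r2\<bar> < 1"
    using abs_r1 by (simp add: abs_mult)
  then show ?thesis
    unfolding alpha_0 by linarith
qed

lemma beta_0_pos: "\<beta> 0 > 0"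
  using params pc_positive mult_sc_pos[of r1 n1] mult_sc_pos[of r2 n2]
  unfolding beta_0 by (auto simp: ks_params_def intro!: add_pos_pos)

lemma constant_scal_pos:
  assumes "admissible_profile m0 minf r1 r2 F" "\<forall>z\<in>{-1..1}. scal n1 n2 r1 r2 F z = c"
  shows "c > 0"
proof -
  have "c * \<alpha> 0 = 2 * \<beta> 0"
    using extremal_linear_system(1)[of F 0 c] assms by simp
  then have "c * \<alpha> 0 > 0"
    using beta_0_pos by simp
  then show ?thesis
    using alpha_0_pos by (simp add: zero_less_mult_iff)
qed

lemma constant_scal_iff:
  assumes adm: "admissible_profile m0 minf r1 r2 F" and "extremal_profile n1 n2 r1 r2 F"
  shows "(\<exists>c. \<forall>z\<in>{-1..1}. scal n1 n2 r1 r2 F z = c) \<longleftrightarrow> \<alpha> 0 * \<beta> 1 - \<alpha> 1 * \<beta> 0 = 0"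
proof -
  obtain A B where affine: "\<forall>z\<in>{-1..1}. scal n1 n2 r1 r2 F z = A * z + B"
    using assms(2) unfolding extremal_profile_def by blast
  have "A * (\<alpha> 0 * \<alpha> 2 - (\<alpha> 1)^2) = 2 * (\<alpha> 0 * \<beta> 1 - \<alpha> 1 * \<beta> 0)"
    using linear_system_2x2_slope[OF extremal_linear_system[OF adm affine]] by (simp add: algebra_simps)
  then have "A = 0 \<longleftrightarrow> \<alpha> 0 * \<beta> 1 - \<alpha> 1 * \<beta> 0 = 0"
    using alpha_gram_det_pos[OF abs_r1 abs_r2] by auto
  moreover have "(\<forall>z\<in>{-1..1}. scal n1 n2 r1 r2 F z = c) \<longleftrightarrow> A = 0 \<and> B = c" for c
    using affine affine_constant_on_interval_iff[of "-1" 1 A B c] by simp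
  ultimately show ?thesis by blast
qed

end

theorem mainTheorem12:
  fixes n1 n2 m0 minf :: int and r1 r2 :: real
  assumes "ks_params n1 n2 m0 minf r1 r2"
  shows "(\<exists>F. admissible_profile m0 minf r1 r2 F \<and> extremal_profile n1 n2 r1 r2 F)
    \<and> (\<forall>F. admissible_profile m0 minf r1 r2 F \<and> extremal_profile n1 n2 r1 r2 F \<longrightarrow>
          ((\<exists>c. \<forall>z\<in>{-1..1}. scal n1 n2 r1 r2 F z = c) \<longleftrightarrow>
             alpha r1 r2 0 * beta n1 n2 m0 minf r1 r2 1 - alpha r1 r2 1 * beta n1 n2 m0 minf r1 r2 0 = 0)
        \<and> (\<forall>c. (\<forall>z\<in>{-1..1}. scal n1 n2 r1 r2 F z = c) \<longrightarrow> c > 0))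
    \<and> (alpha r1 r2 0 * beta n1 n2 m0 minf r1 r2 1 - alpha r1 r2 1 * beta n1 n2 m0 minf r1 r2 0 = 0
        \<longleftrightarrow> fpoly n1 n2 m0 minf r1 r2 = 0)"
proof -
  interpret ks_orbifold n1 n2 m0 minf r1 r2
    using assms by (rule ks_orbifold.intro)
  show ?thesis
  proof (intro conjI allI impI, goal_cases)
    case 1
    show ?case by (rule extremal_admissible_profile_exists)
  next
    case (2 F)
    then show ?case by (intro constant_scal_iff) simp_all
  next
    case (3 F c)
    then show ?case by (intro constant_scal_pos[of F]) simp_all
  next
    case 4
    show ?case using assms by (rule alpha_beta_det_eq_0_iff_fpoly)
  qed
qed

end
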